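(* Let $m,a,b,t\in\mathbb{N}$ with $m\geq 3$, $a\geq 1$, $t\in\{2,\ldots,m-1\}$ and $(t-1)(am+1)<bm+t<t(am+1)$, let $S=\langle m,\ am+1,\ bm+t\rangle$ (a MANS-semigroup with embedding dimension $3$), $q=\left\lfloor\frac{m-1}{t}\right\rfloor$ and $r=(m-1)\bmod t$. (1) If $t$ divides $m$, then $\mathrm{PF}(S)=\{q(bm+t)+r(am+1)-m\}$. (2) If $t$ does not divide $m$, then $\mathrm{PF}(S)=\{(q-1)(bm+t)+(t-1)(am+1)-m,\ q(bm+t)+r(am+1)-m\}$.
   Context: $\mathbb{N}=\{0,1,2,\ldots\}$. $\langle A\rangle$ is the submonoid of $(\mathbb{N},+)$ generated by $A$; a numerical semigroup is a submonoid of $\mathbb{N}$ with finite complement. A pseudo-Frobenius number of $S$ is an $x\in\mathbb{Z}\setminus S$ with $x+s\in S$ for all $s\in S\setminus\{0\}$; $\mathrm{PF}(S)$ is the set of them. A MANS-semigroup is a numerical semigroup with $w(1)<\cdots<w(\mathrm{m}(S)-1)$, where $\mathrm{m}(S)$ is the least element of $S\setminus\{0\}$ and $w(i)$ the least element of $S$ congruent to $i$ modulo $\mathrm{m}(S)$. $a\bmod b$ is the remainder of the division of $a$ by $b$. *)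

theory Defs
  imports Main
begin

inductive_set gen_monoid :: "nat set \<Rightarrow> nat set" for A :: "nat set" where
  zero: "0 \<in> gen_monoid A"
| add: "a \<in> A \<Longrightarrow> x \<in> gen_monoid A \<Longrightarrow> a + x \<in> gen_monoid A"

definition PF :: "nat set \<Rightarrow> int set" where
  "PF S = {x :: int. x \<notin> int ` S \<and> (\<forall>s\<in>S. s \<noteq> 0 \<longrightarrow> x + int s \<in> int ` S)}"

end

(*
  Write A = am + 1 and B = bm + t. For j = qt + r with r < t, the element ap j = qB + rA is
  congruent to j modulo m, and it is the least element of S in its residue class: an element
  km + yA + zB of that class has y + zt congruent to j, the bound B < tA shows that trading t
  copies of A for one B never increases the value, and ap is strictly increasing. So ap is the
  Apery map of S with respect to m, the pseudo-Frobenius numbers are the ap i - m for which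
  ap i - m + A and ap i - m + B lie in S, and these two conditions hold exactly for i = m - 1
  and for the index i = t floor((m-1)/t) - 1, the latter qualifying only when t does not divide m.
*)
theory Submission
  imports Defs
begin

lemma gen_monoid_add:
  "x \<in> gen_monoid A \<Longrightarrow> y \<in> gen_monoid A \<Longrightarrow> x + y \<in> gen_monoid A"
  by (induction x rule: gen_monoid.induct) (auto simp: add.assoc intro: gen_monoid.add)

lemma gen_monoid_multiple: "g \<in> A \<Longrightarrow> c * g \<in> gen_monoid A"
  by (induction c) (auto intro: gen_monoid.intros)

lemma gen_monoid_three_iff:
  "n \<in> gen_monoid {g\<^sub>1, g\<^sub>2, g\<^sub>3} \<longleftrightarrow> (\<exists>k y z. n = k * g\<^sub>1 + y * g\<^sub>2 + z * g\<^sub>3)"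
proof
  show "n \<in> gen_monoid {g\<^sub>1, g\<^sub>2, g\<^sub>3} \<Longrightarrow> \<exists>k y z. n = k * g\<^sub>1 + y * g\<^sub>2 + z * g\<^sub>3"
  proof (induction n rule: gen_monoid.induct)
    case zero
    show ?case by (rule exI[of _ 0]) simp
  next
    case (add g x)
    then obtain k y z where "x = k * g\<^sub>1 + y * g\<^sub>2 + z * g\<^sub>3" by blast
    with add.hyps(1) have "g + x = Suc k * g\<^sub>1 + y * g\<^sub>2 + z * g\<^sub>3 \<or>
      g + x = k * g\<^sub>1 + Suc y * g\<^sub>2 + z * g\<^sub>3 \<or> g + x = k * g\<^sub>1 + y * g\<^sub>2 + Suc z * g\<^sub>3"
      by auto
    then show ?case by blast
  qed
  show "\<exists>k y z. n = k * g\<^sub>1 + y * g\<^sub>2 + z * g\<^sub>3 \<Longrightarrow> n \<in> gen_monoid {g\<^sub>1, g\<^sub>2, g\<^sub>3}"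
    by (auto intro!: gen_monoid_add gen_monoid_multiple)
qed

lemma shifts_into_gen_monoid_iff:
  "(\<forall>s\<in>gen_monoid G. s \<noteq> 0 \<longrightarrow> x + int s \<in> int ` gen_monoid G) \<longleftrightarrow>
   (\<forall>g\<in>G. g \<noteq> 0 \<longrightarrow> x + int g \<in> int ` gen_monoid G)"
proof
  assume "\<forall>s\<in>gen_monoid G. s \<noteq> 0 \<longrightarrow> x + int s \<in> int ` gen_monoid G"
  then show "\<forall>g\<in>G. g \<noteq> 0 \<longrightarrow> x + int g \<in> int ` gen_monoid G"
    using gen_monoid_multiple[of _ G 1] by simp
next
  assume gens: "\<forall>g\<in>G. g \<noteq> 0 \<longrightarrow> x + int g \<in> int ` gen_monoid G"
  have "s \<noteq> 0 \<longrightarrow> x + int s \<in> int ` gen_monoid G" if "s \<in> gen_monoid G" for s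
    using that
  proof (induction s rule: gen_monoid.induct)
    case zero
    show ?case by simp
  next
    case (add g y)
    show ?case
    proof (cases "y = 0")
      case True
      then show ?thesis using add.hyps(1) gens by simp
    next
      case False
      with add.IH obtain u where "u \<in> gen_monoid G" "x + int y = int u" by auto
      then have "g + u \<in> gen_monoid G" "x + int (g + y) = int (g + u)"
        using add.hyps(1) by (auto intro: gen_monoid.add)
      then show ?thesis by (metis image_eqI)
    qed
  qed
  then show "\<forall>s\<in>gen_monoid G. s \<noteq> 0 \<longrightarrow> x + int s \<in> int ` gen_monoid G" by blast
qed

locale apery_map =
  fixes S :: "nat set" and m :: nat and w :: "nat \<Rightarrow> nat"
  assumes pos: "0 < m" and m_mem: "m \<in> S" and add_m_closed: "\<And>n. n \<in> S \<Longrightarrow> n + m \<in> S"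
    and w_mem: "\<And>i. i < m \<Longrightarrow> w i \<in> S" and w_mod: "\<And>i. i < m \<Longrightarrow> w i mod m = i"
    and w_least: "\<And>n. n \<in> S \<Longrightarrow> w (n mod m) \<le> n"
begin

lemma mem_iff: "n \<in> S \<longleftrightarrow> w (n mod m) \<le> n"
proof
  assume le: "w (n mod m) \<le> n"
  have "w (n mod m) mod m = n mod m" using w_mod pos by simp
  then obtain k where n: "n = w (n mod m) + k * m"
    using le by (metis add.commute le_add_diff_inverse mod_eq_dvd_iff_nat dvd_div_mult_self)
  have "w (n mod m) + k * m \<in> S" for k
  proof (induction k)
    case 0
    show ?case using w_mem pos by simp
  next
    case (Suc k)
    then show ?case using add_m_closed[OF Suc] by (simp add: add_ac)
  qed
  then show "n \<in> S" by (subst n)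
qed (rule w_least)

lemma diff_m_mem:
  assumes "n \<in> S" "w (n mod m) < n"
  shows "m \<le> n" "n - m \<in> S"
proof -
  have "w (n mod m) mod m = n mod m" using w_mod pos by simp
  then have "m dvd n - w (n mod m)"
    using mod_eq_dvd_iff_nat[of "w (n mod m)" n m] assms(2) by simp
  then have "w (n mod m) + m \<le> n" using assms(2) by (auto dest: dvd_imp_le)
  then show "m \<le> n" by simp
  then have "(n - m) mod m = n mod m" by (simp add: le_mod_geq)
  then show "n - m \<in> S" using mem_iff \<open>w (n mod m) + m \<le> n\<close> by simp
qed

lemma PF_iff:
  "x \<in> PF S \<longleftrightarrow> (\<exists>i<m. x = int (w i) - int m \<and> (\<forall>s\<in>S. s \<noteq> 0 \<longrightarrow> x + int s \<in> int ` S))"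
proof
  assume x: "x \<in> PF S"
  then obtain n where n: "n \<in> S" "x + int m = int n"
    using m_mem pos unfolding PF_def by force
  have "n = w (n mod m)"
  proof (rule ccontr)
    assume "n \<noteq> w (n mod m)"
    then have "w (n mod m) < n" using w_least n(1) by (simp add: order_less_le)
    then have "x = int (n - m)" "n - m \<in> S" using diff_m_mem n by auto
    then show False using x unfolding PF_def by blast
  qed
  then show "\<exists>i<m. x = int (w i) - int m \<and> (\<forall>s\<in>S. s \<noteq> 0 \<longrightarrow> x + int s \<in> int ` S)"
    using x n(2) pos unfolding PF_def by (auto intro!: exI[of _ "n mod m"])
next
  assume "\<exists>i<m. x = int (w i) - int m \<and> (\<forall>s\<in>S. s \<noteq> 0 \<longrightarrow> x + int s \<in> int ` S)"
  then obtain i where i: "i < m" "x = int (w i) - int m"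
    and shifts: "\<forall>s\<in>S. s \<noteq> 0 \<longrightarrow> x + int s \<in> int ` S" by blast
  have "x \<notin> int ` S"
  proof
    assume "x \<in> int ` S"
    then obtain n where "n \<in> S" "n + m = w i" using i(2) by auto
    then have "n mod m = i" using w_mod[OF i(1)] by (metis mod_add_self2)
    then have "w i \<le> n" using w_least \<open>n \<in> S\<close> by blast
    then show False using \<open>n + m = w i\<close> pos by linarith
  qed
  with shifts show "x \<in> PF S" unfolding PF_def by blast
qed

end

locale mans_edim3 =
  fixes m a b t :: nat
  assumes m_ge: "m \<ge> 3" and a_pos: "a \<ge> 1" and t_ge: "2 \<le> t" and t_le: "t \<le> m - 1"
    and lower: "(t - 1) * (a * m + 1) < b * m + t" and upper: "b * m + t < t * (a * m + 1)"
begin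

abbreviation S :: "nat set" where "S \<equiv> gen_monoid {m, a * m + 1, b * m + t}"

definition ap :: "nat \<Rightarrow> nat" where
  "ap j = (j div t) * (b * m + t) + (j mod t) * (a * m + 1)"

lemma ap_eq: "ap j = m * ((j div t) * b + (j mod t) * a) + j"
proof -
  have "ap j = m * ((j div t) * b + (j mod t) * a) + ((j div t) * t + j mod t)"
    unfolding ap_def by (simp add: algebra_simps)
  then show ?thesis by simp
qed

lemma ap_mod: "ap j mod m = j mod m"
  by (simp add: ap_eq)

lemma ap_Suc_same_block: "Suc (j mod t) \<noteq> t \<Longrightarrow> ap (Suc j) = ap j + (a * m + 1)"
  by (simp add: ap_def mod_Suc div_Suc)

lemma ap_Suc_next_block:
  assumes "Suc (j mod t) = t"
  shows "ap (Suc j) + (t - 1) * (a * m + 1) = ap j + (b * m + t)"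
proof -
  have "Suc j mod t = 0" "Suc j div t = Suc (j div t)" "j mod t = t - 1"
    using assms by (simp_all add: mod_Suc div_Suc)
  then show ?thesis by (simp add: ap_def algebra_simps)
qed

lemma ap_add_t: "ap (j + t) = ap j + (b * m + t)"
proof -
  have "(j + t) div t = Suc (j div t)" "(j + t) mod t = j mod t"
    using t_ge by (simp_all add: div_add_self2)
  then show ?thesis by (simp add: ap_def algebra_simps)
qed

lemma ap_strict_mono: "strict_mono ap"
  unfolding strict_mono_Suc_iff
proof
  fix j
  show "ap j < ap (Suc j)"
  proof (cases "Suc (j mod t) = t")
    case True
    then show ?thesis using ap_Suc_next_block[OF True] lower by linarith
  next
    case False
    then show ?thesis using ap_Suc_same_block[OF False] by simp
  qed
qed

lemma ap_le_combination: "ap (y + z * t) \<le> y * (a * m + 1) + z * (b * m + t)"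
proof -
  have "(y div t) * (b * m + t) \<le> (y div t) * (t * (a * m + 1))"
    using upper by simp
  moreover have "y * (a * m + 1) = (y div t) * (t * (a * m + 1)) + (y mod t) * (a * m + 1)"
    by (metis div_mult_mod_eq add_mult_distrib mult.assoc mult.commute)
  ultimately show ?thesis
    using t_ge by (simp add: ap_def algebra_simps)
qed

lemma ap_mem: "ap j \<in> S"
  unfolding ap_def by (intro gen_monoid_add gen_monoid_multiple) auto

lemma ap_least:
  assumes "n \<in> S" shows "ap (n mod m) \<le> n"
proof -
  obtain k y z where n: "n = k * m + y * (a * m + 1) + z * (b * m + t)"
    using assms gen_monoid_three_iff by blast
  then have "n = m * (k + y * a + z * b) + (y + z * t)"
    by (simp add: algebra_simps)
  then have "n mod m = (y + z * t) mod m" by simp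
  then have "ap (n mod m) \<le> ap (y + z * t)"
    using strict_mono_less_eq[OF ap_strict_mono] by simp
  also have "\<dots> \<le> n"
    using ap_le_combination[of y z] n by linarith
  finally show ?thesis .
qed

sublocale apery_map S m ap
proof
  show "0 < m" using m_ge by simp
  show m_mem: "m \<in> S" using gen_monoid_multiple[of m _ 1] by simp
  show "n + m \<in> S" if "n \<in> S" for n using gen_monoid_add[OF that m_mem] .
  show "ap i \<in> S" for i by (rule ap_mem)
  show "ap i mod m = i" if "i < m" for i using ap_mod that by simp
  show "ap (n mod m) \<le> n" if "n \<in> S" for n using ap_least[OF that] .
qed

lemma b_pos: "1 \<le> b"
proof (rule ccontr)
  assume "\<not> 1 \<le> b"
  then have "b = 0" by simp
  then have "(t - 1) * (a * m + 1) < t" using lower by simp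
  moreover have "(t - 1) * 2 \<le> (t - 1) * (a * m + 1)"
    using a_pos m_ge by (intro mult_le_mono2) (simp add: Suc_le_eq)
  ultimately show False using t_ge by linarith
qed

lemma upper_with_margin: "(b * m + t) + m \<le> t * (a * m + 1)"
proof -
  have "b * m < (t * a) * m" using upper by (simp add: algebra_simps)
  then have "(b + 1) * m \<le> (t * a) * m" by (intro mult_le_mono1) simp
  then show ?thesis by (simp add: algebra_simps)
qed

lemma m_less_generators: "m < a * m + 1" "m < b * m + t"
proof -
  have "1 * m \<le> a * m" "1 * m \<le> b * m"
    using a_pos b_pos by (intro mult_le_mono1; simp)+
  then show "m < a * m + 1" "m < b * m + t" using t_ge by linarith+
qed

lemma ap_plus_am1_minus_m_mem_iff:
  assumes "i < m"
  shows "ap i + (a * m + 1) - m \<in> S \<longleftrightarrow> i mod t = t - 1 \<or> i = m - 1"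
proof -
  define n where "n = ap i + (a * m + 1) - m"
  have n_eq: "n = m * ((i div t) * b + (i mod t) * a + (a - 1)) + Suc i"
    using a_pos unfolding n_def ap_eq by (cases a) (simp_all add: algebra_simps)
  show ?thesis
  proof (cases "i = m - 1")
    case True
    then have "n mod m = 0" using n_eq m_ge by simp
    then show ?thesis using mem_iff[of n] True by (simp add: n_def ap_def)
  next
    case False
    then have "n mod m = Suc i" using n_eq assms by simp
    then have "n \<in> S \<longleftrightarrow> ap (Suc i) \<le> n" using mem_iff by simp
    also have "\<dots> \<longleftrightarrow> i mod t = t - 1"
    proof (cases "Suc (i mod t) = t")
      case True
      have "t * (a * m + 1) = (t - 1) * (a * m + 1) + (a * m + 1)"
        using t_ge by (cases t) simp_all
      then have "ap (Suc i) + m \<le> ap i + (a * m + 1)"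
        using ap_Suc_next_block[OF True] upper_with_margin by linarith
      then have "ap (Suc i) \<le> n" by (simp add: n_def)
      then show ?thesis using True by simp
    next
      case False
      then have "i mod t \<noteq> t - 1" using t_ge by linarith
      moreover have "n < ap (Suc i)"
        using ap_Suc_same_block[OF False] m_ge by (simp add: n_def)
      ultimately show ?thesis by simp
    qed
    finally show ?thesis using False by (simp add: n_def)
  qed
qed

lemma ap_plus_bmt_minus_m_mem_iff:
  assumes "i < m"
  shows "ap i + (b * m + t) - m \<in> S \<longleftrightarrow> m \<le> i + t"
proof (cases "m \<le> i + t")
  case True
  define n where "n = ap i + (b * m + t) - m"
  have "n = m * ((i div t) * b + (i mod t) * a + b) + (i + t - m)"
    using True unfolding n_def ap_eq by (simp add: algebra_simps)
  moreover have "i + t - m < m" using assms t_le by linarith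
  ultimately have "n mod m = i + t - m" by simp
  then have "ap (n mod m) \<le> ap i"
    using strict_mono_less_eq[OF ap_strict_mono] t_le by simp
  also have "\<dots> \<le> n" using m_less_generators(2) by (simp add: n_def)
  finally show ?thesis using True mem_iff n_def by simp
next
  case False
  define n where "n = ap i + (b * m + t) - m"
  have "n = m * ((i div t) * b + (i mod t) * a + (b - 1)) + (i + t)"
    using b_pos unfolding n_def ap_eq by (cases b) (simp_all add: algebra_simps)
  then have "n mod m = i + t" using False by simp
  moreover have "n < ap (i + t)"
    unfolding n_def ap_add_t using m_ge m_less_generators(2) by linarith
  ultimately show ?thesis using False mem_iff n_def by simp
qed

lemma PF_eq:
  "PF S = (\<lambda>i. int (ap i) - int m) ` {i. i < m \<and> (i mod t = t - 1 \<or> i = m - 1) \<and> m \<le> i + t}"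
proof -
  have shift: "int (ap i) - int m + int g \<in> int ` S \<longleftrightarrow> ap i + g - m \<in> S" if "m \<le> g" for i g
  proof -
    have "int (ap i) - int m + int g = int (ap i + g - m)" using that by simp
    then show ?thesis by (metis inj_image_mem_iff inj_of_nat)
  qed
  have shifts_iff: "int (ap i) - int m + int m \<in> int ` S \<and>
      int (ap i) - int m + int (a * m + 1) \<in> int ` S \<and> int (ap i) - int m + int (b * m + t) \<in> int ` S
      \<longleftrightarrow> (i mod t = t - 1 \<or> i = m - 1) \<and> m \<le> i + t" if "i < m" for i
    unfolding shift[OF less_imp_le[OF m_less_generators(1)]] shift[OF less_imp_le[OF m_less_generators(2)]]
      ap_plus_am1_minus_m_mem_iff[OF that] ap_plus_bmt_minus_m_mem_iff[OF that]
    using ap_mem by simp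
  have "x \<in> PF S \<longleftrightarrow>
      (\<exists>i<m. x = int (ap i) - int m \<and> (i mod t = t - 1 \<or> i = m - 1) \<and> m \<le> i + t)" for x
  proof -
    have gens: "(\<forall>g\<in>{m, a * m + 1, b * m + t}. g \<noteq> 0 \<longrightarrow> P g) \<longleftrightarrow> P m \<and> P (a * m + 1) \<and> P (b * m + t)"
      for P using m_ge m_less_generators by auto
    show ?thesis
      unfolding PF_iff shifts_into_gen_monoid_iff gens using shifts_iff by blast
  qed
  then show ?thesis by blast
qed

lemma ap_pred_mult:
  assumes "1 \<le> k"
  shows "ap (k * t - 1) = (k - 1) * (b * m + t) + (t - 1) * (a * m + 1)"
proof -
  have split: "k * t - 1 = (t - 1) + (k - 1) * t"
    using assms t_ge by (cases k) simp_all
  have "(k * t - 1) div t = (k - 1) + (t - 1) div t"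
    unfolding split by (rule div_mult_self1) (use t_ge in simp)
  moreover have "(k * t - 1) mod t = (t - 1) mod t"
    unfolding split by (rule mod_mult_self1)
  ultimately show ?thesis using t_ge by (simp add: ap_def)
qed

end

lemma last_block_indices:
  fixes m t :: nat
  assumes "0 < t" "t < m"
  defines "q \<equiv> (m - 1) div t"
  shows "{i. i < m \<and> (i mod t = t - 1 \<or> i = m - 1) \<and> m \<le> i + t} =
         (if t dvd m then {m - 1} else {q * t - 1, m - 1})"
    (is "?I = _")
proof -
  define r where "r = (m - 1) mod t"
  have m_eq: "m = q * t + (r + 1)" and "r < t"
    using assms unfolding q_def r_def by simp_all
  have "1 \<le> q" unfolding q_def using assms by (simp add: Suc_le_eq div_greater_zero_iff)
  have dvd_iff: "t dvd m \<longleftrightarrow> r + 1 = t"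
  proof -
    have "t dvd m \<longleftrightarrow> t dvd r + 1" unfolding m_eq by (rule dvd_add_right_iff) simp
    also have "\<dots> \<longleftrightarrow> r + 1 = t" using \<open>r < t\<close> by (auto dest: dvd_imp_le)
    finally show ?thesis .
  qed
  have below_top: "Suc i = q * t \<and> r + 2 \<le> t"
    if "i < m - 1" "i mod t = t - 1" "m \<le> i + t" for i
  proof -
    have "t dvd Suc i" using that(2) assms(1) by (simp add: mod_Suc dvd_eq_mod_eq_0)
    then obtain k where k: "Suc i = k * t" by (metis dvdE mult.commute)
    have "k * t < (q + 1) * t" using k that(1) m_eq \<open>r < t\<close> by simp
    moreover have "q * t < (k + 1) * t" using k that(3) m_eq by simp
    ultimately have "k < q + 1" "q < k + 1" using mult_less_cancel2 by blast+
    then have "k = q" by simp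
    then show ?thesis using k that(3) m_eq by simp
  qed
  have top: "m - 1 \<in> ?I" using assms by simp
  show ?thesis
  proof (cases "t dvd m")
    case True
    have "?I \<subseteq> {m - 1}"
    proof
      fix i assume "i \<in> ?I"
      then show "i \<in> {m - 1}" using below_top[of i] dvd_iff True by (cases "i < m - 1") auto
    qed
    then show ?thesis using True top by auto
  next
    case False
    have "q * t - 1 \<in> ?I"
    proof -
      have "q * t - 1 = (t - 1) + (q - 1) * t"
        using \<open>1 \<le> q\<close> assms(1) by (cases q) simp_all
      then have "(q * t - 1) mod t = (t - 1) mod t" by (metis mod_mult_self1)
      then have "(q * t - 1) mod t = t - 1" using assms(1) by simp
      moreover have "r + 2 \<le> t" using dvd_iff False \<open>r < t\<close> by simp
      moreover have "t \<le> q * t" using \<open>1 \<le> q\<close> by simp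
      ultimately have "q * t - 1 < m" "m \<le> q * t - 1 + t" using m_eq assms(1) by linarith+
      with \<open>(q * t - 1) mod t = t - 1\<close> show ?thesis by simp
    qed
    moreover have "?I \<subseteq> {q * t - 1, m - 1}"
    proof
      fix i assume "i \<in> ?I"
      then show "i \<in> {q * t - 1, m - 1}" using below_top[of i] by (cases "i < m - 1") auto
    qed
    ultimately show ?thesis using False top by auto
  qed
qed

theorem proposition3p22:
  fixes m a b t :: nat
  assumes "m \<ge> 3" and "a \<ge> 1" and "2 \<le> t" and "t \<le> m - 1"
    and "(t - 1) * (a * m + 1) < b * m + t" and "b * m + t < t * (a * m + 1)"
  defines "S \<equiv> gen_monoid {m, a * m + 1, b * m + t}"
    and "q \<equiv> (m - 1) div t" and "r \<equiv> (m - 1) mod t"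
  shows "(t dvd m \<longrightarrow>
            PF S = {int q * int (b * m + t) + int r * int (a * m + 1) - int m})
       \<and> (\<not> t dvd m \<longrightarrow>
            PF S = {(int q - 1) * int (b * m + t) + (int t - 1) * int (a * m + 1) - int m,
                    int q * int (b * m + t) + int r * int (a * m + 1) - int m})"
proof -
  interpret mans_edim3 m a b t using assms(1-6) by unfold_locales
  have t: "0 < t" "t < m" using assms(3,4) by linarith+
  have "1 \<le> q" unfolding q_def using t by (simp add: Suc_le_eq div_greater_zero_iff)
  have PF: "PF S = (\<lambda>i. int (ap i) - int m) ` (if t dvd m then {m - 1} else {q * t - 1, m - 1})"
    unfolding S_def PF_eq q_def last_block_indices[OF t] ..
  have "ap (m - 1) = q * (b * m + t) + r * (a * m + 1)"
    unfolding ap_def q_def r_def ..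
  then have top: "int (ap (m - 1)) - int m = int q * int (b * m + t) + int r * int (a * m + 1) - int m"
    by (simp only: of_nat_add of_nat_mult)
  have "1 \<le> t" using t by simp
  with ap_pred_mult[OF \<open>1 \<le> q\<close>] \<open>1 \<le> q\<close> have second: "int (ap (q * t - 1)) - int m
      = (int q - 1) * int (b * m + t) + (int t - 1) * int (a * m + 1) - int m"
    by (simp only: of_nat_add of_nat_mult of_nat_diff of_nat_1)
  show ?thesis
    unfolding PF using top second by simp
qed

end
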